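(* Let $D\subseteq\mathbb{R}$ and let $f,g:D\to\mathbb{R}$ be ordinal decreasing on $D$. Then $f+g$ is ordinal decreasing on $D$.
   Context: For $h:D\to\mathbb{R}$, a strictly decreasing sequence $x_1>x_2>\cdots$ in $D$ is $h$-bad if $h(x_1)>h(x_2)>\cdots$; $h$ is ordinal decreasing if there is no infinite $h$-bad sequence. *)

theory Defs
  imports Main "HOL.Real"
begin

definition h_bad :: "real set \<Rightarrow> (real \<Rightarrow> real) \<Rightarrow> (nat \<Rightarrow> real) \<Rightarrow> bool" where
  "h_bad D h x \<longleftrightarrow> (\<forall>n. x n \<in> D) \<and> (\<forall>n. x (Suc n) < x n) \<and> (\<forall>n. h (x (Suc n)) < h (x n))"

definition ordinal_decreasing :: "real set \<Rightarrow> (real \<Rightarrow> real) \<Rightarrow> bool" where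
  "ordinal_decreasing D h \<longleftrightarrow> \<not> (\<exists>x. h_bad D h x)"

end

(* If x_1 > x_2 > ... were (f + g)-bad, then for all i < j the pair (x_j, x_i) would be a
   descent of f or of g, since f x_j + g x_j < f x_i + g x_i. Colouring the pairs i < j
   accordingly, Ramsey's theorem yields an infinite subsequence along which always the same
   function descends, i.e. an f-bad or a g-bad sequence. In relational form: the descents of
   f + g form a transitive relation covered by two well-founded ones, hence are well-founded. *)
theory Submission
  imports Defs "HOL-Library.Ramsey"
begin

definition bad_pairs :: "real set \<Rightarrow> (real \<Rightarrow> real) \<Rightarrow> real rel" where
  "bad_pairs D h = {(a, b). a \<in> D \<and> b \<in> D \<and> a < b \<and> h a < h b}"

lemma h_bad_iff_down_chain:
  "h_bad D h x \<longleftrightarrow> (\<forall>i. (x (Suc i), x i) \<in> bad_pairs D h)"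
  unfolding h_bad_def bad_pairs_def by auto

lemma ordinal_decreasing_iff_wf_bad_pairs:
  "ordinal_decreasing D h \<longleftrightarrow> wf (bad_pairs D h)"
  unfolding ordinal_decreasing_def wf_iff_no_infinite_down_chain h_bad_iff_down_chain ..

lemma trans_bad_pairs: "trans (bad_pairs D h)"
  unfolding trans_def bad_pairs_def by auto

lemma bad_pairs_add_subset:
  "bad_pairs D (\<lambda>x. f x + g x) \<subseteq> bad_pairs D f \<union> bad_pairs D g"
  unfolding bad_pairs_def by auto

lemma wf_if_trans_subset_Un_wf:
  assumes "trans r" and "r \<subseteq> s \<union> t" and "wf s" and "wf t"
  shows "wf r"
proof (rule trans_disj_wf_implies_wf[OF \<open>trans r\<close>])
  let ?T = "\<lambda>i::nat. if i = 0 then s else t"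
  have "\<forall>i<2. wf (?T i)"
    using \<open>wf s\<close> \<open>wf t\<close> by simp
  moreover have "r \<subseteq> (\<Union>i<2. ?T i)"
    using \<open>r \<subseteq> s \<union> t\<close> by (simp add: numeral_2_eq_2 lessThan_Suc Un_commute)
  ultimately show "disj_wf r"
    unfolding disj_wf by (intro exI conjI)
qed

theorem lemma4:
  fixes D :: "real set" and f g :: "real \<Rightarrow> real"
  assumes "ordinal_decreasing D f" and "ordinal_decreasing D g"
  shows "ordinal_decreasing D (\<lambda>x. f x + g x)"
  using wf_if_trans_subset_Un_wf[OF trans_bad_pairs bad_pairs_add_subset] assms
  by (simp add: ordinal_decreasing_iff_wf_bad_pairs)

end
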